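(* In the allocation problem and Synchronized Greedy (SG) mechanism described in the context, suppose $\min_j q_j\ge \max_i r_i$. Then the SG mechanism is strategy-proof: for every agent $i$ and every permutation $\sigma_i$ of the goods, letting $\sigma$ be the bid profile in which agent $i$ bids $\sigma_i$ and every other agent $i'$ bids its true list $\pi_{i'}$, it is not the case that $a^\sigma_{i*} >_i a^\pi_{i*}$.
   Context: There are $m$ distinct divisible goods; good $j$ is available in amount $q_j>0$. There are $n$ agents; agent $i$ is to receive a total of $r_i>0$, with $\sum_j q_j=\sum_i r_i$. An allocation is a family $a_{ij}\ge 0$ with $\sum_j a_{ij}=r_i$ and $\sum_i a_{ij}=q_j$; $a_{i*}=(a_{i1},\ldots,a_{im})$ is agent $i$'s share. Each agent $i$ has a true preference list $\pi_i$, a permutation of the goods ($\pi_i(1)$ most preferred); $\pi=(\pi_1,\ldots,\pi_n)$. Agent $i$ prefers $a_{i*}$ to $b_{i*}$, written $a_{i*}>_i b_{i*}$, if the leftmost nonzero coordinate of $(a_{i\pi_i(\ell)}-b_{i\pi_i(\ell)})_{\ell=1}^m$ is positive. The SG mechanism: each agent $i$ bids a permutation $\sigma_i$ of the goods; over time $t\in[0,1]$ each agent $i$ receives, at rate $r_i$, the good highest in $\sigma_i$ among those not yet exhausted (a good is exhausted when the total amount handed out equals $q_j$; several agents may receive a good simultaneously; upon exhaustion, agents receiving it switch instantly to their next non-exhausted good). $a^\sigma_{ij}$ is the total amount of good $j$ agent $i$ receives under bid profile $\sigma$. *)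

theory Defs
  imports Complex_Main
begin

text \<open>Goods have type 'g, agents type 'a (both finite). A preference list / bid is a
list of all goods without repetition; its head is the most preferred good.\<close>

definition is_perm_list :: "'g list \<Rightarrow> bool" where
  "is_perm_list xs \<longleftrightarrow> distinct xs \<and> set xs = UNIV"

definition lex_prefers :: "'g list \<Rightarrow> ('g \<Rightarrow> real) \<Rightarrow> ('g \<Rightarrow> real) \<Rightarrow> bool" where
  "lex_prefers p a b \<longleftrightarrow>
     (\<exists>k < length p. (\<forall>l < k. a (p ! l) = b (p ! l)) \<and> a (p ! k) > b (p ! k))"

text \<open>State of the SG process: (current time, remaining amount of each good, amounts allocated so far).\<close>
type_synonym ('a, 'g) sg_state = "real \<times> ('g \<Rightarrow> real) \<times> ('a \<Rightarrow> 'g \<Rightarrow> real)"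

definition exhausted :: "('g \<Rightarrow> real) \<Rightarrow> 'g set" where
  "exhausted rem = {j. rem j \<le> 0}"

definition cur_good :: "'g list \<Rightarrow> 'g set \<Rightarrow> 'g" where
  "cur_good s E = hd (filter (\<lambda>j. j \<notin> E) s)"

definition sg_step :: "('a::finite \<Rightarrow> real) \<Rightarrow> ('a \<Rightarrow> 'g::finite list)
    \<Rightarrow> ('a, 'g) sg_state \<Rightarrow> ('a, 'g) sg_state" where
  "sg_step r \<sigma> st =
    (let (t, rem, al) = st; E = exhausted rem in
     if E = UNIV \<or> t \<ge> 1 then st else
     (let c = (\<lambda>i. cur_good (\<sigma> i) E);
          R = (\<lambda>j. \<Sum>i\<in>{i. c i = j}. r i);
          \<delta> = Min (insert (1 - t) {rem j / R j | j. j \<notin> E \<and> R j > 0})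
      in (t + \<delta>, (\<lambda>j. rem j - R j * \<delta>),
          (\<lambda>i j. al i j + (if c i = j then r i * \<delta> else 0)))))"

text \<open>The SG allocation a^\<sigma>: run the phases from time 0; at most CARD('g) goods can be
exhausted before time 1, so CARD('g)+1 phases suffice (further phases change nothing).\<close>
definition SG :: "('g::finite \<Rightarrow> real) \<Rightarrow> ('a::finite \<Rightarrow> real) \<Rightarrow> ('a \<Rightarrow> 'g list)
    \<Rightarrow> 'a \<Rightarrow> 'g \<Rightarrow> real" where
  "SG q r \<sigma> = snd (snd ((sg_step r \<sigma> ^^ (card (UNIV :: 'g set) + 1)) (0, q, (\<lambda>i j. 0))))"

end

theory Submission
  imports Defs
begin

text \<open>Run the truthful profile and the deviation side by side. They coincide up to the first
phase in which agent i's current good differs; there the truthful run feeds i its best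
non-exhausted good g until g is exhausted (or time runs out), while the deviating agent spends
a positive amount of time on something else. Every good ranked above g by i is already
exhausted at that moment, so i's shares of them agree in both runs, and it remains to show
that i gets strictly less of g after deviating. If time runs out, this is because i starts
on g later. Otherwise, since all other agents bid truthfully, no good is exhausted later
under the deviation than in the truthful run before g runs out, so every other agent that
eats g in the truthful run eats it at least as long under the deviation. As q g \<ge> r i,
agent i alone cannot exhaust g, so some other agent does eat g; if g is still available under
the deviation that agent even gets strictly more of it, leaving strictly less for i.\<close>

lemma cur_good_nth:
  assumes "\<exists>y\<in>set xs. y \<notin> E"
  shows "\<exists>k<length xs. cur_good xs E = xs!k \<and> xs!k \<notin> E \<and> (\<forall>l<k. xs!l \<in> E)"
  using assms
proof (induction xs)
  case Nil then show ?case by simp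
next
  case (Cons a xs)
  show ?case
  proof (cases "a \<in> E")
    case False
    then show ?thesis by (rule_tac x=0 in exI) (simp add: cur_good_def)
  next
    case True
    then have "\<exists>y\<in>set xs. y \<notin> E" using Cons.prems by auto
    from Cons.IH[OF this] obtain k where
      k: "k<length xs" "cur_good xs E = xs!k" "xs!k \<notin> E" "\<forall>l<k. xs!l \<in> E" by blast
    have "cur_good (a#xs) E = cur_good xs E" using True by (simp add: cur_good_def)
    then show ?thesis using k True
      by (rule_tac x="Suc k" in exI) (auto simp: less_Suc_eq_0_disj)
  qed
qed

lemma cur_good_eqI:
  assumes "k<length xs" "xs!k \<notin> E" "\<forall>l<k. xs!l \<in> E"
  shows "cur_good xs E = xs!k"
  using assms
proof (induction xs arbitrary: k)
  case Nil then show ?case by simp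
next
  case (Cons a xs)
  show ?case
  proof (cases k)
    case 0 then show ?thesis using Cons.prems by (simp add: cur_good_def)
  next
    case (Suc k')
    have "a \<in> E" using Cons.prems Suc by force
    moreover have "cur_good xs E = xs!k'"
      using Cons.IH[of k'] Cons.prems Suc by force
    ultimately show ?thesis using Suc by (simp add: cur_good_def)
  qed
qed

lemma perm_list_ex_notin: "is_perm_list xs \<Longrightarrow> E \<noteq> UNIV \<Longrightarrow> \<exists>y\<in>set xs. y \<notin> E"
  unfolding is_perm_list_def by auto

lemma cur_good_notin: "is_perm_list xs \<Longrightarrow> E \<noteq> UNIV \<Longrightarrow> cur_good xs E \<notin> E"
  using cur_good_nth[OF perm_list_ex_notin] by metis

lemma sg_step_stop: "1 \<le> t \<Longrightarrow> sg_step r \<sigma> (t, rem, a) = (t, rem, a)"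
  unfolding sg_step_def Let_def by simp

lemma sg_step_cong:
  assumes "\<And>k. cur_good (\<sigma> k) (exhausted rem) = cur_good (\<sigma>' k) (exhausted rem)"
  shows "sg_step r \<sigma> (t, rem, a) = sg_step r \<sigma>' (t, rem, a)"
  unfolding sg_step_def Let_def prod.case by (simp only: assms)

section \<open>Phases of a single run\<close>

locale sg_run =
  fixes q :: "'g::finite \<Rightarrow> real" and r :: "'a::finite \<Rightarrow> real" and \<sigma> :: "'a \<Rightarrow> 'g list"
  assumes supply_pos: "\<forall>j. q j > 0" and rate_pos: "\<forall>k. r k > 0"
    and supply_eq_demand: "(\<Sum>j\<in>UNIV. q j) = (\<Sum>k\<in>UNIV. r k)"
    and bids_perm: "\<forall>k. is_perm_list (\<sigma> k)"
begin

definition state where "state n = (sg_step r \<sigma> ^^ n) (0, q, \<lambda>i j. 0)"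
definition time where "time n = fst (state n)"
definition remaining where "remaining n = fst (snd (state n))"
definition alloc where "alloc n = snd (snd (state n))"
definition exh where "exh n = exhausted (remaining n)"
definition cur where "cur n k = cur_good (\<sigma> k) (exh n)"
definition load where "load n h = (\<Sum>k\<in>{k. cur n k = h}. r k)"
definition dur where
  "dur n = Min (insert (1 - time n) {remaining n h / load n h | h. h \<notin> exh n \<and> load n h > 0})"
definition N where "N = card (UNIV::'g set) + 1"

lemma state_eq: "state n = (time n, remaining n, alloc n)"
  by (simp add: time_def remaining_def alloc_def)

lemma state_Suc: "state (Suc n) = sg_step r \<sigma> (state n)"
  by (simp add: state_def)

lemma SG_eq_alloc_N: "SG q r \<sigma> = alloc N"
  by (simp add: SG_def alloc_def state_def N_def)

lemma time_0: "time 0 = 0" by (simp add: time_def state_def)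
lemma alloc_0: "alloc 0 k h = 0" by (simp add: alloc_def state_def)

definition phase_inv where
  "phase_inv n \<longleftrightarrow> 0 \<le> time n \<and> time n \<le> 1 \<and> (\<forall>h. remaining n h \<ge> 0)
     \<and> (\<forall>h. remaining n h = q h - (\<Sum>k\<in>UNIV. alloc n k h)) \<and> (\<forall>k h. alloc n k h \<ge> 0)
     \<and> (\<forall>k. (\<Sum>h\<in>UNIV. alloc n k h) = r k * time n)"

lemma phase_inv_0: "phase_inv 0"
  using supply_pos by (auto simp: phase_inv_def time_def remaining_def alloc_def state_def less_imp_le)

lemma time_eq_1_if_all_exhausted:
  assumes "phase_inv n" "exh n = UNIV"
  shows "time n = 1"
proof -
  have "\<forall>h. remaining n h \<le> 0" using assms(2) by (auto simp: exh_def exhausted_def)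
  then have "\<forall>h. remaining n h = 0" using assms(1) unfolding phase_inv_def by (meson order_antisym)
  then have "\<forall>h. q h = (\<Sum>k\<in>UNIV. alloc n k h)" using assms(1) by (auto simp: phase_inv_def)
  then have "(\<Sum>h\<in>UNIV. q h) = (\<Sum>h\<in>UNIV. \<Sum>k\<in>UNIV. alloc n k h)" by simp
  also have "\<dots> = (\<Sum>k\<in>UNIV. \<Sum>h\<in>UNIV. alloc n k h)" by (rule sum.swap)
  also have "\<dots> = (\<Sum>k\<in>UNIV. r k) * time n"
    using assms(1) by (simp add: phase_inv_def sum_distrib_right)
  finally have "(\<Sum>k\<in>UNIV. r k) * time n = (\<Sum>k\<in>UNIV. r k) * 1" using supply_eq_demand by simp
  moreover have "(\<Sum>k\<in>UNIV. r k) > 0" using rate_pos by (simp add: sum_pos)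
  ultimately show ?thesis by simp
qed

lemma state_Suc_stop: "time n \<ge> 1 \<Longrightarrow> state (Suc n) = state n"
  using sg_step_stop[of "time n" r \<sigma> "remaining n" "alloc n"] state_eq[of n] state_Suc[of n] by simp

lemma time_Suc_stop: "time n \<ge> 1 \<Longrightarrow> time (Suc n) = time n"
  using state_Suc_stop by (simp add: time_def)
lemma alloc_Suc_stop: "time n \<ge> 1 \<Longrightarrow> alloc (Suc n) = alloc n"
  using state_Suc_stop by (simp add: alloc_def)
lemma remaining_Suc_stop: "time n \<ge> 1 \<Longrightarrow> remaining (Suc n) = remaining n"
  using state_Suc_stop by (simp add: remaining_def)

lemma cur_notin_exh_if_inv: "phase_inv n \<Longrightarrow> time n < 1 \<Longrightarrow> cur n k \<notin> exh n"
proof -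
  assume "phase_inv n" "time n < 1"
  then have "exh n \<noteq> UNIV" using time_eq_1_if_all_exhausted by force
  then show ?thesis unfolding cur_def using cur_good_notin bids_perm by blast
qed

lemma load_nonneg: "load n h \<ge> 0"
  using rate_pos by (simp add: load_def sum_nonneg less_imp_le)

lemma sum_if_cur: "(\<Sum>k\<in>UNIV. if cur n k = h then r k * d else 0) = load n h * d"
  by (simp add: load_def sum.If_cases sum_distrib_right)

lemma notin_exh_if_load_pos: "phase_inv n \<Longrightarrow> time n < 1 \<Longrightarrow> load n h > 0 \<Longrightarrow> h \<notin> exh n"
  using cur_notin_exh_if_inv unfolding load_def by (metis (mono_tags) empty_Collect_eq less_irrefl sum.empty)

lemma state_Suc_if_inv:
  assumes "phase_inv n" "time n < 1"
  shows "state (Suc n) = (time n + dur n, \<lambda>h. remaining n h - load n h * dur n,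
     \<lambda>k h. alloc n k h + (if cur n k = h then r k * dur n else 0))"
proof -
  have c: "\<not> (exh n = UNIV \<or> time n \<ge> 1)" using assms time_eq_1_if_all_exhausted by force
  show ?thesis
    unfolding state_Suc state_eq[of n] sg_step_def Let_def prod.case exh_def[symmetric] if_not_P[OF c]
      dur_def load_def cur_def by (rule refl)
qed

lemma
  assumes "time n < 1"
  shows dur_cases: "dur n = 1 - time n \<or>
      (\<exists>h. h \<notin> exh n \<and> load n h > 0 \<and> dur n = remaining n h / load n h)"
    and dur_le: "dur n \<le> 1 - time n"
    and dur_le_ratio: "h \<notin> exh n \<Longrightarrow> load n h > 0 \<Longrightarrow> dur n \<le> remaining n h / load n h"
    and dur_pos: "dur n > 0"
proof -
  let ?F = "{remaining n h / load n h | h. h \<notin> exh n \<and> load n h > 0}"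
  have fin: "finite ?F"
    by (rule finite_subset[of _ "range (\<lambda>h. remaining n h / load n h)"]) auto
  have mem: "dur n \<in> insert (1 - time n) ?F" unfolding dur_def by (rule Min_in) (use fin in simp_all)
  have le: "\<forall>x\<in>insert (1 - time n) ?F. dur n \<le> x" unfolding dur_def using fin by simp
  show "dur n = 1 - time n \<or>
      (\<exists>h. h \<notin> exh n \<and> load n h > 0 \<and> dur n = remaining n h / load n h)"
    using mem by blast
  show "dur n \<le> 1 - time n" using le by blast
  show "dur n \<le> remaining n h / load n h" if "h \<notin> exh n" "load n h > 0" using le that by blast
  have "\<forall>x\<in>insert (1 - time n) ?F. x > 0" using assms by (auto simp: exh_def exhausted_def)
  then show "dur n > 0" using mem by blast
qed

lemma load_dur_le_remaining:
  assumes "phase_inv n" "time n < 1"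
  shows "load n h * dur n \<le> remaining n h"
proof (cases "load n h > 0")
  case True
  then have "dur n \<le> remaining n h / load n h"
    using dur_le_ratio[OF assms(2)] notin_exh_if_load_pos[OF assms] by blast
  then show ?thesis using True by (simp add: field_simps)
next
  case False
  then have "load n h = 0" using load_nonneg[of n h] by simp
  moreover have "remaining n h \<ge> 0" using assms(1) unfolding phase_inv_def by blast
  ultimately show ?thesis by simp
qed

lemma phase_inv_Suc: assumes "phase_inv n" shows "phase_inv (Suc n)"
proof (cases "time n < 1")
  case False
  then have "time (Suc n) = time n" "remaining (Suc n) = remaining n" "alloc (Suc n) = alloc n"
    using time_Suc_stop remaining_Suc_stop alloc_Suc_stop by simp_all
  then show ?thesis using assms unfolding phase_inv_def by (elim ssubst) assumption
next
  case True
  have st: "time (Suc n) = time n + dur n" "remaining (Suc n) h = remaining n h - load n h * dur n"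
    "alloc (Suc n) k h = alloc n k h + (if cur n k = h then r k * dur n else 0)" for k h
    using state_Suc_if_inv[OF assms True] by (simp_all add: time_def remaining_def alloc_def)
  have d: "dur n > 0" "dur n \<le> 1 - time n" using dur_pos[OF True] dur_le[OF True] by simp_all
  have I: "0 \<le> time n" "\<forall>h. remaining n h = q h - (\<Sum>k\<in>UNIV. alloc n k h)"
    "\<forall>k h. alloc n k h \<ge> 0" "\<forall>k. (\<Sum>h\<in>UNIV. alloc n k h) = r k * time n"
    using assms unfolding phase_inv_def by blast+
  have "\<forall>h. remaining (Suc n) h = q h - (\<Sum>k\<in>UNIV. alloc (Suc n) k h)"
    using I(2) by (simp add: st sum.distrib sum_if_cur)
  moreover have "\<forall>k. (\<Sum>h\<in>UNIV. alloc (Suc n) k h) = r k * time (Suc n)"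
    using I(4) by (simp add: st sum.distrib distrib_left)
  moreover have "\<forall>k h. alloc (Suc n) k h \<ge> 0"
    using I(3) d rate_pos by (simp add: st less_imp_le)
  moreover have "\<forall>h. remaining (Suc n) h \<ge> 0"
    using load_dur_le_remaining[OF assms True] by (simp add: st)
  moreover have "0 \<le> time (Suc n)" "time (Suc n) \<le> 1"
    using I(1) d by (simp_all add: st)
  ultimately show ?thesis unfolding phase_inv_def by blast
qed

lemma phase_inv: "phase_inv n"
  by (induction n) (use phase_inv_0 phase_inv_Suc in auto)

lemma time_nonneg: "0 \<le> time n" and time_le_1: "time n \<le> 1"
  and remaining_nonneg: "remaining n h \<ge> 0"
  and remaining_eq: "remaining n h = q h - (\<Sum>k\<in>UNIV. alloc n k h)"
  and alloc_nonneg: "alloc n k h \<ge> 0"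
  and alloc_total: "(\<Sum>h\<in>UNIV. alloc n k h) = r k * time n"
  using phase_inv[of n] unfolding phase_inv_def by blast+

lemma time_Suc: "time n < 1 \<Longrightarrow> time (Suc n) = time n + dur n"
  using state_Suc_if_inv[OF phase_inv] by (simp add: time_def)
lemma remaining_Suc: "time n < 1 \<Longrightarrow> remaining (Suc n) h = remaining n h - load n h * dur n"
  using state_Suc_if_inv[OF phase_inv] by (simp add: remaining_def)
lemma alloc_Suc: "time n < 1 \<Longrightarrow>
    alloc (Suc n) k h = alloc n k h + (if cur n k = h then r k * dur n else 0)"
  using state_Suc_if_inv[OF phase_inv] by (simp add: alloc_def)
lemma cur_notin_exh: "time n < 1 \<Longrightarrow> cur n k \<notin> exh n"
  using cur_notin_exh_if_inv[OF phase_inv] .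

lemma time_less_Suc: "time n < 1 \<Longrightarrow> time n < time (Suc n)"
  by (simp add: time_Suc dur_pos)

lemma time_mono: "m \<le> n \<Longrightarrow> time m \<le> time n"
proof (rule lift_Suc_mono_le[of time])
  show "time n \<le> time (Suc n)" for n
  proof (cases "time n < 1")
    case True
    then show ?thesis using time_less_Suc by (simp add: less_imp_le)
  qed (simp add: time_Suc_stop)
qed

lemma remaining_antimono: "m \<le> n \<Longrightarrow> remaining n h \<le> remaining m h"
proof (rule lift_Suc_antimono_le[of "\<lambda>n. remaining n h"])
  show "remaining (Suc n) h \<le> remaining n h" for n
  proof (cases "time n < 1")
    case True
    then show ?thesis using remaining_Suc dur_pos load_nonneg[of n h] by (simp add: less_imp_le)
  qed (use remaining_Suc_stop in simp)
qed

lemma exh_mono: "m \<le> n \<Longrightarrow> exh m \<subseteq> exh n"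
proof
  fix h assume "m \<le> n" "h \<in> exh m"
  then show "h \<in> exh n" using remaining_antimono[of m n h] unfolding exh_def exhausted_def by simp
qed

lemma state_stable: assumes "time n \<ge> 1" "n \<le> m" shows "state m = state n"
proof -
  have "state (n + d) = state n" for d
  proof (induction d)
    case (Suc d)
    then have "time (n + d) = time n" by (simp add: time_def)
    then show ?case using Suc state_Suc_stop[of "n + d"] assms(1) by simp
  qed simp
  from this[of "m - n"] show ?thesis using assms(2) by simp
qed

lemma alloc_stable: "time n \<ge> 1 \<Longrightarrow> n \<le> m \<Longrightarrow> alloc m = alloc n"
  unfolding alloc_def using state_stable[of n m] by simp

text \<open>Each phase before time 1 exhausts a new good, so N phases suffice.\<close>

lemma time_1_or_card_exh: "time n = 1 \<or> n \<le> card (exh n)"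
proof (induction n)
  case 0 then show ?case by simp
next
  case (Suc n)
  show ?case
  proof (cases "time n < 1")
    case False
    then show ?thesis using time_Suc_stop[of n] time_le_1[of n] by simp
  next
    case True
    consider "dur n = 1 - time n" | h where "h \<notin> exh n" "load n h > 0" "dur n = remaining n h / load n h"
      using dur_cases[OF True] by blast
    then show ?thesis
    proof cases
      case 1 then show ?thesis using time_Suc[OF True] by simp
    next
      case 2
      then have "h \<in> exh (Suc n)" using remaining_Suc[OF True, of h] by (simp add: exh_def exhausted_def)
      then have "insert h (exh n) \<subseteq> exh (Suc n)" using exh_mono[of n "Suc n"] by auto
      then have "card (insert h (exh n)) \<le> card (exh (Suc n))" by (rule card_mono[rotated]) simp
      then show ?thesis using 2(1) Suc.IH True by auto
    qed
  qed
qed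

lemma time_N: "time N = 1"
proof -
  have "card (exh N) \<le> card (UNIV :: 'g set)" by (rule card_mono) simp_all
  then show ?thesis using time_1_or_card_exh[of N] by (simp add: N_def)
qed

lemma less_N_if_time_less_1: "time n < 1 \<Longrightarrow> n < N"
  using time_mono[of N n] time_N by force

lemma cur_eqI:
  assumes "l < length (\<sigma> k)" "\<sigma> k ! l = h" "h \<notin> exh n" "\<forall>l'<l. \<sigma> k ! l' \<in> exh n"
  shows "cur n k = h"
  unfolding cur_def using cur_good_eqI[of l "\<sigma> k" "exh n"] assms by simp

lemma cur_nth:
  assumes "time n < 1"
  shows "\<exists>l<length (\<sigma> k). \<sigma> k ! l = cur n k \<and> (\<forall>l'<l. \<sigma> k ! l' \<in> exh n)"
proof -
  have "exh n \<noteq> UNIV" using cur_notin_exh[OF assms] by blast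
  then obtain l where "l < length (\<sigma> k)" "cur_good (\<sigma> k) (exh n) = \<sigma> k ! l"
      "\<forall>l'<l. \<sigma> k ! l' \<in> exh n"
    using cur_good_nth[OF perm_list_ex_notin[OF bids_perm[rule_format]]] by blast
  then show ?thesis unfolding cur_def by (intro exI[of _ l]) simp
qed

lemma alloc_eating:
  assumes "m \<le> n" "\<forall>p. m \<le> p \<and> p < n \<longrightarrow> cur p k = h"
  shows "alloc n k h = alloc m k h + r k * (time n - time m)"
  using assms(1)
proof (induction n rule: dec_induct)
  case (step p)
  show ?case
  proof (cases "time p < 1")
    case True
    then show ?thesis using step assms(2) alloc_Suc[OF True, of k h] time_Suc[OF True]
      by (simp add: algebra_simps)
  qed (use step alloc_Suc_stop time_Suc_stop in simp)
qed simp

lemma alloc_not_eating: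
  assumes "m \<le> n" "\<forall>p. m \<le> p \<and> p < n \<and> time p < 1 \<longrightarrow> cur p k \<noteq> h"
  shows "alloc n k h = alloc m k h"
  using assms(1)
proof (induction n rule: dec_induct)
  case (step p)
  show ?case
  proof (cases "time p < 1")
    case True
    then show ?thesis using step assms(2) alloc_Suc[OF True, of k h] by simp
  qed (use step alloc_Suc_stop in simp)
qed simp

lemma alloc_increment_le:
  assumes "m \<le> n"
  shows "alloc n k h - alloc m k h \<le> r k * (time n - time m)"
  using assms
proof (induction n rule: dec_induct)
  case (step p)
  show ?case
  proof (cases "time p < 1")
    case True
    have "alloc (Suc p) k h \<le> alloc p k h + r k * dur p"
      using alloc_Suc[OF True, of k h] dur_pos[OF True] rate_pos by (simp add: less_imp_le)
    then show ?thesis using step time_Suc[OF True] by (simp add: algebra_simps)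
  qed (use step alloc_Suc_stop time_Suc_stop in simp)
qed simp

lemma alloc_const_after_exhausted:
  assumes "h \<in> exh m" "m \<le> n"
  shows "alloc n k h = alloc m k h"
proof (rule alloc_not_eating[OF assms(2)], intro allI impI)
  fix p assume p: "m \<le> p \<and> p < n \<and> time p < 1"
  then have "h \<in> exh p" using exh_mono[of m p] assms(1) by blast
  then show "cur p k \<noteq> h" using cur_notin_exh p by blast
qed

section \<open>Continuous time\<close>

text \<open>Two runs have different phase boundaries, so they are compared at common real times y,
interpolating the allocation linearly within the phase containing y.\<close>

definition phase_at where "phase_at y = (GREATEST n. n \<le> N \<and> time n \<le> y)"
definition exh_at where "exh_at y = exh (phase_at y)"
definition cur_at where "cur_at y k = cur (phase_at y) k"
definition eat_rate where "eat_rate n k h = (if cur n k = h then r k else 0)"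
definition eat_rate_at where "eat_rate_at y k h = eat_rate (phase_at y) k h"
definition alloc_at where
  "alloc_at y k h = alloc (phase_at y) k h + (y - time (phase_at y)) * eat_rate_at y k h"

lemma phase_at_le_N: "0 \<le> y \<Longrightarrow> phase_at y \<le> N"
  and time_phase_at_le: "0 \<le> y \<Longrightarrow> time (phase_at y) \<le> y"
  unfolding phase_at_def using GreatestI_nat[of "\<lambda>n. n \<le> N \<and> time n \<le> y" 0 N] time_0 by auto

lemma le_phase_at: "m \<le> N \<Longrightarrow> time m \<le> y \<Longrightarrow> m \<le> phase_at y"
  unfolding phase_at_def by (rule Greatest_le_nat) auto

lemma phase_at_eqI:
  assumes "time n \<le> y" "y < time (Suc n)"
  shows "phase_at y = n"
proof -
  have "time n < 1" using assms time_le_1[of "Suc n"] by simp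
  then have "n \<le> N" using less_N_if_time_less_1 by (simp add: less_imp_le)
  then have "n \<le> phase_at y" using le_phase_at assms(1) by blast
  moreover have "\<not> Suc n \<le> phase_at y"
    using time_mono time_phase_at_le time_nonneg[of n] assms by (meson leD order_trans)
  ultimately show ?thesis by simp
qed

lemma phase_at_before_1:
  assumes "0 \<le> y" "y < 1"
  shows "time (phase_at y) < 1" and "y < time (Suc (phase_at y))"
proof -
  show lt: "time (phase_at y) < 1" using time_phase_at_le[OF assms(1)] assms(2) by simp
  have "Suc (phase_at y) \<le> N" using less_N_if_time_less_1[OF lt] by simp
  then show "y < time (Suc (phase_at y))" using le_phase_at[of "Suc (phase_at y)" y] by fastforce
qed

lemma phase_at_mono: "0 \<le> y \<Longrightarrow> y \<le> y' \<Longrightarrow> phase_at y \<le> phase_at y'"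
  using le_phase_at[OF phase_at_le_N] time_phase_at_le by force

lemma exh_at_mono: "0 \<le> y \<Longrightarrow> y \<le> y' \<Longrightarrow> exh_at y \<subseteq> exh_at y'"
  unfolding exh_at_def by (intro exh_mono phase_at_mono)

lemma exh_sub_exh_at: "n \<le> N \<Longrightarrow> exh n \<subseteq> exh_at (time n)"
  unfolding exh_at_def by (intro exh_mono le_phase_at) simp_all

lemma cur_at_notin_exh_at: "0 \<le> y \<Longrightarrow> y < 1 \<Longrightarrow> cur_at y k \<notin> exh_at y"
  unfolding cur_at_def exh_at_def using cur_notin_exh phase_at_before_1(1) by blast

lemma cur_at_in_phase: "time n \<le> y \<Longrightarrow> y < time (Suc n) \<Longrightarrow> cur_at y k = cur n k"
  using phase_at_eqI by (simp add: cur_at_def)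

lemma cur_at_eqI:
  assumes "l < length (\<sigma> k)" "\<sigma> k ! l = h" "h \<notin> exh_at y" "\<forall>l'<l. \<sigma> k ! l' \<in> exh_at y"
  shows "cur_at y k = h"
  using cur_eqI assms unfolding cur_at_def exh_at_def by blast

lemma alloc_at_time: assumes "m \<le> N" shows "alloc_at (time m) = alloc m"
proof -
  let ?p = "phase_at (time m)"
  have "m \<le> ?p" using le_phase_at[OF assms order_refl] .
  then have eq: "time ?p = time m" using time_mono time_phase_at_le[OF time_nonneg] by (meson antisym)
  have "alloc ?p = alloc m"
  proof (cases "time m < 1")
    case True
    have "\<not> Suc m \<le> ?p" using time_mono[of "Suc m" ?p] time_less_Suc[OF True] eq by linarith
    then have "?p = m" using \<open>m \<le> ?p\<close> by simp
    then show ?thesis by simp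
  next
    case False
    then show ?thesis using alloc_stable[of m ?p] \<open>m \<le> ?p\<close> by simp
  qed
  then show ?thesis using eq by (simp add: alloc_at_def[abs_def])
qed

lemma alloc_at_0: "alloc_at 0 k h = 0"
  using alloc_at_time[of 0] time_0 alloc_0 by simp

lemma alloc_at_1: "alloc_at 1 = alloc N"
  using alloc_at_time[of N] time_N by simp

lemma alloc_at_in_phase:
  assumes "time n \<le> y" "y \<le> time (Suc n)" "time n < 1"
  shows "alloc_at y k h = alloc n k h + (y - time n) * eat_rate n k h"
proof (cases "y < time (Suc n)")
  case True
  then show ?thesis using phase_at_eqI[OF assms(1) True] by (simp add: alloc_at_def eat_rate_at_def)
next
  case False
  then have y: "y = time (Suc n)" using assms by simp
  have "Suc n \<le> N" using less_N_if_time_less_1[OF assms(3)] by simp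
  then have "alloc_at y k h = alloc (Suc n) k h" using alloc_at_time y by simp
  also have "\<dots> = alloc n k h + (y - time n) * eat_rate n k h"
    using alloc_Suc[OF assms(3)] time_Suc[OF assms(3)] y by (simp add: eat_rate_def)
  finally show ?thesis .
qed

lemma alloc_at_increment_bounds_in_phase:
  assumes "time n \<le> s" "s \<le> x" "x \<le> time (Suc n)" "time n < 1"
    and "\<forall>y. s \<le> y \<and> y < x \<longrightarrow> lo \<le> eat_rate_at y k h \<and> eat_rate_at y k h \<le> hi"
  shows "lo * (x - s) \<le> alloc_at x k h - alloc_at s k h \<and> alloc_at x k h - alloc_at s k h \<le> hi * (x - s)"
proof (cases "s < x")
  case False then show ?thesis using assms by simp
next
  case True
  have d: "alloc_at x k h - alloc_at s k h = (x - s) * eat_rate n k h"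
    using alloc_at_in_phase[of n x k h] alloc_at_in_phase[of n s k h] assms
    by (simp add: algebra_simps)
  have "eat_rate_at s k h = eat_rate n k h"
    using phase_at_eqI assms True by (simp add: eat_rate_at_def)
  then have "lo \<le> eat_rate n k h \<and> eat_rate n k h \<le> hi" using assms(5) True by force
  then show ?thesis using d True by (simp add: mult_left_mono mult_right_mono mult.commute)
qed

lemma alloc_at_increment_bounds_upto:
  assumes "\<forall>y. s \<le> y \<and> y < x \<longrightarrow> lo \<le> eat_rate_at y k h \<and> eat_rate_at y k h \<le> hi"
    "0 \<le> s" "s \<le> x" "x \<le> time m"
  shows "lo * (x - s) \<le> alloc_at x k h - alloc_at s k h \<and> alloc_at x k h - alloc_at s k h \<le> hi * (x - s)"
  using assms
proof (induction m arbitrary: s x)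
  case 0
  then have "s = x" using time_0 by simp
  then show ?case by simp
next
  case (Suc m)
  show ?case
  proof (cases "x \<le> time m")
    case True show ?thesis by (rule Suc.IH[OF Suc.prems(1-3) True])
  next
    case x: False
    then have m1: "time m < 1" using Suc.prems time_le_1[of "Suc m"] by simp
    show ?thesis
    proof (cases "time m \<le> s")
      case True
      show ?thesis by (rule alloc_at_increment_bounds_in_phase[OF True Suc.prems(3,4) m1 Suc.prems(1)])
    next
      case False
      have c1: "\<forall>y. s \<le> y \<and> y < time m \<longrightarrow> lo \<le> eat_rate_at y k h \<and> eat_rate_at y k h \<le> hi"
        and c2: "\<forall>y. time m \<le> y \<and> y < x \<longrightarrow> lo \<le> eat_rate_at y k h \<and> eat_rate_at y k h \<le> hi"
        using Suc.prems(1) False x by auto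
      have A: "lo * (time m - s) \<le> alloc_at (time m) k h - alloc_at s k h
          \<and> alloc_at (time m) k h - alloc_at s k h \<le> hi * (time m - s)"
        using Suc.IH[OF c1 Suc.prems(2)] False by simp
      have B: "lo * (x - time m) \<le> alloc_at x k h - alloc_at (time m) k h
          \<and> alloc_at x k h - alloc_at (time m) k h \<le> hi * (x - time m)"
        using alloc_at_increment_bounds_in_phase[OF order_refl _ Suc.prems(4) m1 c2] x by simp
      show ?thesis using A B by (simp add: algebra_simps)
    qed
  qed
qed

lemma alloc_at_increment_bounds:
  assumes "0 \<le> s" "s \<le> x" "x \<le> 1"
    and "\<forall>y. s \<le> y \<and> y < x \<longrightarrow> lo \<le> eat_rate_at y k h \<and> eat_rate_at y k h \<le> hi"
  shows "lo * (x - s) \<le> alloc_at x k h - alloc_at s k h \<and> alloc_at x k h - alloc_at s k h \<le> hi * (x - s)"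
  using alloc_at_increment_bounds_upto[OF assms(4,1,2), of N] time_N assms(3) by simp

lemma sum_eat_rate: "(\<Sum>k\<in>UNIV. eat_rate n k h) = load n h"
  using sum_if_cur[of n h 1] unfolding eat_rate_def mult_1_right .

lemma eat_rate_at_bounds: "0 \<le> eat_rate_at y k h" "eat_rate_at y k h \<le> r k"
  using rate_pos by (simp_all add: eat_rate_at_def eat_rate_def less_imp_le)

lemma alloc_at_mono: "0 \<le> s \<Longrightarrow> s \<le> x \<Longrightarrow> x \<le> 1 \<Longrightarrow> alloc_at s k h \<le> alloc_at x k h"
  using alloc_at_increment_bounds[of s x 0 k h "r k"] eat_rate_at_bounds by simp

lemma alloc_at_increment_le:
  "0 \<le> s \<Longrightarrow> s \<le> x \<Longrightarrow> x \<le> 1 \<Longrightarrow> alloc_at x k h - alloc_at s k h \<le> r k * (x - s)"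
  using alloc_at_increment_bounds[of s x 0 k h "r k"] eat_rate_at_bounds by simp

lemma alloc_at_nonneg: "0 \<le> y \<Longrightarrow> y \<le> 1 \<Longrightarrow> alloc_at y k h \<ge> 0"
  using alloc_at_mono[of 0 y] alloc_at_0 by simp

lemma alloc_at_eating:
  assumes "0 \<le> s" "s \<le> x" "x \<le> 1" "\<forall>y. s \<le> y \<and> y < x \<longrightarrow> cur_at y k = h"
  shows "alloc_at x k h - alloc_at s k h = r k * (x - s)"
  using alloc_at_increment_bounds[OF assms(1-3), of "r k" k h "r k"] assms(4)
  by (simp add: eat_rate_at_def eat_rate_def cur_at_def)

lemma alloc_at_not_eating:
  assumes "0 \<le> s" "s \<le> x" "x \<le> 1" "\<forall>y. s \<le> y \<and> y < x \<longrightarrow> cur_at y k \<noteq> h"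
  shows "alloc_at x k h = alloc_at s k h"
  using alloc_at_increment_bounds[OF assms(1-3), of 0 k h 0] assms(4)
  by (simp add: eat_rate_at_def eat_rate_def cur_at_def)

lemma alloc_at_const_after_exhausted:
  assumes "h \<in> exh_at s" "0 \<le> s" "s \<le> x" "x \<le> 1"
  shows "alloc_at x k h = alloc_at s k h"
proof (rule alloc_at_not_eating[OF assms(2-4)], intro allI impI)
  fix y assume y: "s \<le> y \<and> y < x"
  then have "h \<in> exh_at y" using exh_at_mono[OF assms(2)] assms(1) by blast
  moreover have "cur_at y k \<notin> exh_at y" using cur_at_notin_exh_at y assms by simp
  ultimately show "cur_at y k \<noteq> h" by blast
qed

lemma alloc_at_total_bound:
  assumes "0 \<le> y" "y \<le> 1"
  shows "(\<Sum>k\<in>UNIV. alloc_at y k h) \<le> q h \<and> (h \<notin> exh_at y \<longrightarrow> (\<Sum>k\<in>UNIV. alloc_at y k h) < q h)"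
proof (cases "y < 1")
  case False
  then have y: "y = 1" using assms by simp
  have "(\<Sum>k\<in>UNIV. alloc_at y k h) = q h - remaining N h" using y alloc_at_1 remaining_eq[of N h] by simp
  moreover have "h \<notin> exh_at y \<Longrightarrow> remaining N h > 0"
    using y phase_at_le_N[of 1] le_phase_at[of N 1] time_N by (simp add: exh_at_def exh_def exhausted_def)
  ultimately show ?thesis using remaining_nonneg[of N h] by auto
next
  case True
  let ?p = "phase_at y"
  have p: "time ?p \<le> y" "y < time (Suc ?p)" "time ?p < 1"
    using time_phase_at_le phase_at_before_1 assms(1) True by simp_all
  have A: "alloc_at y k h = alloc ?p k h + (y - time ?p) * eat_rate ?p k h" for k
    using alloc_at_in_phase[OF p(1) less_imp_le[OF p(2)] p(3)] .
  have "(\<Sum>k\<in>UNIV. alloc_at y k h) = (\<Sum>k\<in>UNIV. alloc ?p k h) + (y - time ?p) * load ?p h"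
    unfolding A sum.distrib sum_distrib_left[symmetric] sum_eat_rate ..
  also have "\<dots> = q h - remaining ?p h + (y - time ?p) * load ?p h" using remaining_eq[of ?p h] by simp
  finally have S: "(\<Sum>k\<in>UNIV. alloc_at y k h) = q h - remaining ?p h + (y - time ?p) * load ?p h" .
  have lt: "y - time ?p < dur ?p" using p time_Suc[OF p(3)] by simp
  have R: "load ?p h * dur ?p \<le> remaining ?p h" using load_dur_le_remaining[OF phase_inv p(3)] .
  consider "load ?p h = 0" | "load ?p h > 0" using load_nonneg[of ?p h] by fastforce
  then have "(y - time ?p) * load ?p h \<le> remaining ?p h
      \<and> (h \<notin> exh_at y \<longrightarrow> (y - time ?p) * load ?p h < remaining ?p h)"
  proof cases
    case 1
    then show ?thesis using remaining_nonneg[of ?p h] by (simp add: exh_at_def exh_def exhausted_def)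
  next
    case 2
    then have "(y - time ?p) * load ?p h < load ?p h * dur ?p" using lt by (simp add: mult.commute)
    then show ?thesis using R by simp
  qed
  then show ?thesis using S by simp
qed

lemma alloc_at_less_alloc_at_1_if_eating:
  assumes "0 \<le> y" "y < 1" "cur_at y k = h"
  shows "alloc_at y k h < alloc_at 1 k h"
proof -
  let ?p = "phase_at y"
  let ?y' = "time (Suc ?p)"
  have p: "time ?p \<le> y" "y < ?y'" using time_phase_at_le phase_at_before_1 assms(1,2) by simp_all
  have "\<forall>y'. y \<le> y' \<and> y' < ?y' \<longrightarrow> cur_at y' k = h"
  proof (intro allI impI)
    fix y' assume "y \<le> y' \<and> y' < ?y'"
    then have "cur_at y' k = cur ?p k" using cur_at_in_phase[of ?p y' k] p(1) by simp
    then show "cur_at y' k = h" using assms(3) by (simp add: cur_at_def)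
  qed
  then have "alloc_at ?y' k h - alloc_at y k h = r k * (?y' - y)"
    using alloc_at_eating[OF assms(1) _ time_le_1] p(2) by simp
  moreover have "r k * (?y' - y) > 0" using rate_pos p(2) by simp
  moreover have "alloc_at ?y' k h \<le> alloc_at 1 k h"
    using alloc_at_mono[OF _ time_le_1 order_refl] assms(1) p(2) by simp
  ultimately show ?thesis by simp
qed

end

section \<open>A unilateral deviation\<close>

locale sg_deviation =
  fixes q :: "'g::finite \<Rightarrow> real" and r :: "'a::finite \<Rightarrow> real"
    and \<pi> :: "'a \<Rightarrow> 'g list" and i :: 'a and \<sigma> :: "'a \<Rightarrow> 'g list"
  assumes supply_pos: "\<forall>j. q j > 0" and rate_pos: "\<forall>k. r k > 0"
    and supply_eq_demand: "(\<Sum>j\<in>UNIV. q j) = (\<Sum>k\<in>UNIV. r k)"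
    and truth_perm: "\<forall>k. is_perm_list (\<pi> k)"
    and min_supply_ge_max_rate: "(MIN j. q j) \<ge> (MAX k. r k)"
    and dev_perm: "\<forall>k. is_perm_list (\<sigma> k)"
    and others_truthful: "\<forall>k. k \<noteq> i \<longrightarrow> \<sigma> k = \<pi> k"
begin

sublocale T: sg_run q r \<pi>
  using supply_pos rate_pos supply_eq_demand truth_perm by unfold_locales

sublocale D: sg_run q r \<sigma>
  using supply_pos rate_pos supply_eq_demand dev_perm by unfold_locales

lemma N_eq: "D.N = T.N" by (simp add: T.N_def D.N_def)

lemma rate_le_supply: "r k \<le> q h"
proof -
  have "r k \<le> (MAX k. r k)" by (rule Max_ge) simp_all
  moreover have "(MIN j. q j) \<le> q h" by (rule Min_le) simp_all
  ultimately show ?thesis using min_supply_ge_max_rate by simp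
qed

lemma state_eq_while_i_agrees:
  assumes "\<forall>n'<n. T.time n' < 1 \<longrightarrow> T.cur n' i = D.cur n' i"
  shows "D.state n = T.state n"
  using assms
proof (induction n)
  case 0 then show ?case unfolding T.state_def D.state_def by simp
next
  case (Suc n)
  have IH: "D.state n = T.state n" using Suc by simp
  show ?case
  proof (cases "T.time n < 1")
    case False
    have "D.time n = T.time n" using IH by (simp add: T.time_def D.time_def)
    then show ?thesis using False T.state_Suc_stop D.state_Suc_stop IH by simp
  next
    case True
    have E: "D.exh n = T.exh n" using IH by (simp add: T.exh_def D.exh_def T.remaining_def D.remaining_def)
    have "cur_good (\<sigma> k) (exhausted (T.remaining n)) = cur_good (\<pi> k) (exhausted (T.remaining n))" for k
    proof (cases "k = i")
      case True
      then show ?thesis using Suc.prems \<open>T.time n < 1\<close> E by (simp add: T.cur_def D.cur_def T.exh_def)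
    qed (use others_truthful in simp)
    then have "sg_step r \<sigma> (T.time n, T.remaining n, T.alloc n)
        = sg_step r \<pi> (T.time n, T.remaining n, T.alloc n)"
      by (rule sg_step_cong)
    then show ?thesis unfolding D.state_Suc T.state_Suc IH T.state_eq[of n] .
  qed
qed

lemma truthful_total_exhausted: "h \<in> T.exh n \<Longrightarrow> (\<Sum>k\<in>UNIV. T.alloc n k h) = q h"
  using T.remaining_eq[of n h] T.remaining_nonneg[of n h] by (simp add: T.exh_def exhausted_def)

text \<open>An agent other than i bids the same list in both runs. If the goods it skips are
exhausted in the deviation no later than in the truthful run, it reaches h no later there, and
it keeps eating h under the deviation for as long as h is available.\<close>

lemma other_agent_eats_in_dev:
  assumes "h \<notin> T.exh m" "\<forall>n\<le>m. T.exh n \<subseteq> D.exh_at (T.time n)"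
    "h \<notin> D.exh_at (T.time (Suc m))" "k \<noteq> i" "T.alloc (Suc m) k h > 0"
  shows "\<exists>m0\<le>m. T.alloc (Suc m) k h = r k * (T.time (Suc m) - T.time m0)
           \<and> (\<forall>y. T.time m0 \<le> y \<and> y \<le> T.time (Suc m) \<longrightarrow> D.cur_at y k = h)"
proof -
  let ?P = "\<lambda>p. p \<le> m \<and> T.time p < 1 \<and> T.cur p k = h"
  have ex: "\<exists>p. ?P p"
  proof (rule ccontr)
    assume "\<not> (\<exists>p. ?P p)"
    then have "T.alloc (Suc m) k h = T.alloc 0 k h" by (intro T.alloc_not_eating) auto
    then show False using assms(5) T.alloc_0 by simp
  qed
  define m0 where "m0 = (LEAST p. ?P p)"
  have m0: "?P m0" unfolding m0_def by (rule LeastI_ex[OF ex])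
  have start: "T.alloc m0 k h = 0"
    using not_less_Least[of _ ?P] m0 T.alloc_0 T.alloc_not_eating[of 0 m0 k h]
    unfolding m0_def[symmetric] by auto
  obtain l where l: "l < length (\<pi> k)" "\<pi> k ! l = h" "\<forall>l'<l. \<pi> k ! l' \<in> T.exh m0"
    using T.cur_nth[of m0 k] m0 by blast
  have "T.cur p k = h" if "m0 \<le> p" "p < Suc m" for p
  proof -
    have "h \<notin> T.exh p" using assms(1) T.exh_mono[of p m] that by auto
    then show ?thesis using T.cur_eqI[OF l(1,2)] l(3) T.exh_mono[OF that(1)] by blast
  qed
  then have A: "T.alloc (Suc m) k h = r k * (T.time (Suc m) - T.time m0)"
    using T.alloc_eating[of m0 "Suc m" k h] start m0 by simp
  have B: "D.cur_at y k = h" if y: "T.time m0 \<le> y" "y \<le> T.time (Suc m)" for y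
  proof -
    have "T.exh m0 \<subseteq> D.exh_at y"
      using assms(2) m0 D.exh_at_mono[OF T.time_nonneg y(1)] by blast
    moreover have "h \<notin> D.exh_at y"
      using assms(3) D.exh_at_mono[of y] y T.time_nonneg[of m0] by fastforce
    ultimately show ?thesis using D.cur_at_eqI[of l k h y] l others_truthful assms(4) by auto
  qed
  show ?thesis using A B m0 by blast
qed

lemma other_alloc_le_dev_alloc_at:
  assumes "h \<notin> T.exh m" "\<forall>n\<le>m. T.exh n \<subseteq> D.exh_at (T.time n)"
    "h \<notin> D.exh_at (T.time (Suc m))" "k \<noteq> i"
  shows "T.alloc (Suc m) k h \<le> D.alloc_at (T.time (Suc m)) k h"
proof (cases "T.alloc (Suc m) k h > 0")
  case False
  then show ?thesis using D.alloc_at_nonneg[OF T.time_nonneg T.time_le_1, of "Suc m" k h] by simp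
next
  case True
  obtain m0 where m0: "m0 \<le> m" "T.alloc (Suc m) k h = r k * (T.time (Suc m) - T.time m0)"
    "\<forall>y. T.time m0 \<le> y \<and> y \<le> T.time (Suc m) \<longrightarrow> D.cur_at y k = h"
    using other_agent_eats_in_dev[OF assms True] by blast
  have le: "T.time m0 \<le> T.time (Suc m)" using T.time_mono[of m0 "Suc m"] m0(1) by simp
  have "D.alloc_at (T.time (Suc m)) k h - D.alloc_at (T.time m0) k h = r k * (T.time (Suc m) - T.time m0)"
    using D.alloc_at_eating[OF T.time_nonneg le T.time_le_1] m0(3) by simp
  then show ?thesis using m0(2) D.alloc_at_nonneg[OF T.time_nonneg T.time_le_1, of m0 k h] by simp
qed

end

section \<open>The first phase in which the deviating agent eats differently\<close>

locale first_divergence = sg_deviation +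
  fixes n0 :: nat
  assumes time_n0: "T.time n0 < 1" and cur_n0: "T.cur n0 i \<noteq> D.cur n0 i"
    and agree_before_n0: "\<forall>n<n0. T.time n < 1 \<longrightarrow> T.cur n i = D.cur n i"
begin

abbreviation "g \<equiv> T.cur n0 i"
abbreviation "t0 \<equiv> T.time n0"

lemma dev_state_upto_n0: "n \<le> n0 \<Longrightarrow> D.state n = T.state n"
  using agree_before_n0 by (intro state_eq_while_i_agrees) auto

lemma same_upto_n0:
  assumes "n \<le> n0"
  shows "D.time n = T.time n" "D.alloc n = T.alloc n" "D.exh n = T.exh n"
  using dev_state_upto_n0[OF assms]
  by (simp_all add: D.time_def T.time_def D.alloc_def T.alloc_def D.exh_def T.exh_def
      D.remaining_def T.remaining_def)

lemma n0_less_N: "n0 < T.N"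
  using T.less_N_if_time_less_1[OF time_n0] .

lemma dev_alloc_at_t0: "D.alloc_at t0 = T.alloc n0"
  using D.alloc_at_time[of n0] same_upto_n0[of n0] n0_less_N N_eq by simp

lemma g_nth: "\<exists>l<length (\<pi> i). \<pi> i ! l = g \<and> (\<forall>l'<l. \<pi> i ! l' \<in> T.exh n0)"
  using T.cur_nth[OF time_n0] .

definition g_end where "g_end = (LEAST n. g \<in> T.exh n \<or> 1 \<le> T.time n)"

lemma g_end: "g \<in> T.exh g_end \<or> 1 \<le> T.time g_end"
  unfolding g_end_def by (rule LeastI[of _ T.N]) (simp add: T.time_N)

lemma g_end_le_N: "g_end \<le> T.N"
  unfolding g_end_def by (rule Least_le) (simp add: T.time_N)

lemma before_g_end: "p < g_end \<Longrightarrow> g \<notin> T.exh p \<and> T.time p < 1"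
  using not_less_Least[of p "\<lambda>n. g \<in> T.exh n \<or> 1 \<le> T.time n"] unfolding g_end_def[symmetric] by simp

lemma n0_less_g_end: "n0 < g_end"
proof (rule ccontr)
  assume "\<not> n0 < g_end"
  then have "T.exh g_end \<subseteq> T.exh n0" "T.time g_end \<le> T.time n0" using T.exh_mono T.time_mono by simp_all
  then show False using g_end T.cur_notin_exh[OF time_n0] time_n0 by auto
qed

lemma truthful_eats_g: assumes "n0 \<le> p" "p < g_end" shows "T.cur p i = g"
proof -
  obtain l where l: "l < length (\<pi> i)" "\<pi> i ! l = g" "\<forall>l'<l. \<pi> i ! l' \<in> T.exh n0"
    using g_nth by blast
  have "T.exh n0 \<subseteq> T.exh p" using T.exh_mono assms(1) .
  then show ?thesis using T.cur_eqI[OF l(1,2)] l(3) before_g_end[OF assms(2)] by blast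
qed

lemma truthful_alloc_g: "T.alloc T.N i g = T.alloc n0 i g + r i * (T.time g_end - t0)"
proof -
  have "\<forall>p. n0 \<le> p \<and> p < g_end \<longrightarrow> T.cur p i = g" using truthful_eats_g by blast
  then have "T.alloc g_end i g = T.alloc n0 i g + r i * (T.time g_end - t0)"
    by (rule T.alloc_eating[OF less_imp_le[OF n0_less_g_end]])
  moreover have "T.alloc T.N i g = T.alloc g_end i g"
  proof (cases "g \<in> T.exh g_end")
    case True
    then show ?thesis by (rule T.alloc_const_after_exhausted[OF _ g_end_le_N])
  next
    case False
    then show ?thesis using g_end T.alloc_stable[OF _ g_end_le_N] by simp
  qed
  ultimately show ?thesis by simp
qed

lemma own_alloc_le_dev_alloc_at:
  assumes "n0 \<le> n" "n < g_end" "h \<noteq> g" "T.time n \<le> y" "y \<le> 1"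
  shows "T.alloc n i h \<le> D.alloc_at y i h"
proof -
  have "\<forall>p. n0 \<le> p \<and> p < n \<and> T.time p < 1 \<longrightarrow> T.cur p i \<noteq> h"
  proof (intro allI impI)
    fix p assume "n0 \<le> p \<and> p < n \<and> T.time p < 1"
    then have "T.cur p i = g" using truthful_eats_g[of p] assms(2) by simp
    then show "T.cur p i \<noteq> h" using assms(3) by simp
  qed
  then have "T.alloc n i h = T.alloc n0 i h" by (rule T.alloc_not_eating[OF assms(1)])
  also have "\<dots> = D.alloc_at t0 i h" using dev_alloc_at_t0 by simp
  also have "\<dots> \<le> D.alloc_at y i h"
    using D.alloc_at_mono[OF T.time_nonneg _ assms(5)] T.time_mono[OF assms(1)] assms(4) by simp
  finally show ?thesis .
qed

text \<open>Otherwise the deviation would hand out strictly less of such a good although every agent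
gets at least as much of it as in the truthful run.\<close>

lemma truthful_exh_sub_dev_exh_at: "n < g_end \<Longrightarrow> T.exh n \<subseteq> D.exh_at (T.time n)"
proof (induction n rule: less_induct)
  case (less n)
  show ?case
  proof (cases "n \<le> n0")
    case True
    then show ?thesis using D.exh_sub_exh_at[of n] same_upto_n0[OF True] n0_less_N N_eq by simp
  next
    case False
    then obtain m where m: "n = Suc m" "n0 \<le> m" by (cases n) auto
    have IH: "\<forall>n'\<le>m. T.exh n' \<subseteq> D.exh_at (T.time n')" using less m by simp
    show ?thesis
    proof
      fix h assume h: "h \<in> T.exh n"
      show "h \<in> D.exh_at (T.time n)"
      proof (cases "h \<in> T.exh m")
        case True
        then have "h \<in> D.exh_at (T.time m)" using IH by blast
        moreover have "D.exh_at (T.time m) \<subseteq> D.exh_at (T.time n)"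
          using D.exh_at_mono[OF T.time_nonneg T.time_mono[of m n]] m by simp
        ultimately show ?thesis by blast
      next
        case hm: False
        show ?thesis
        proof (rule ccontr)
          assume hD: "h \<notin> D.exh_at (T.time n)"
          have "T.alloc n k h \<le> D.alloc_at (T.time n) k h" for k
          proof (cases "k = i")
            case True
            have "h \<noteq> g" using before_g_end[OF less.prems] h by blast
            then show ?thesis using own_alloc_le_dev_alloc_at[OF _ less.prems] True False T.time_le_1 by simp
          next
            case False
            then show ?thesis using other_alloc_le_dev_alloc_at[OF hm IH] hD m by simp
          qed
          then have "(\<Sum>k\<in>UNIV. T.alloc n k h) \<le> (\<Sum>k\<in>UNIV. D.alloc_at (T.time n) k h)"
            by (intro sum_mono)
          moreover have "(\<Sum>k\<in>UNIV. D.alloc_at (T.time n) k h) < q h"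
            using D.alloc_at_total_bound[OF T.time_nonneg T.time_le_1] hD by blast
          ultimately show False using truthful_total_exhausted[OF h] by simp
        qed
      qed
    qed
  qed
qed

lemma dev_first_phase:
  shows t0_less_dev_time: "t0 < D.time (Suc n0)"
    and dev_alloc_Suc_n0: "D.alloc (Suc n0) i g = T.alloc n0 i g"
    and dev_avoids_g: "\<forall>y. t0 \<le> y \<and> y < D.time (Suc n0) \<longrightarrow> D.cur_at y i \<noteq> g"
proof -
  have dt: "D.time n0 = t0" using same_upto_n0 by simp
  then have lt: "D.time n0 < 1" using time_n0 by simp
  show "t0 < D.time (Suc n0)" using D.time_less_Suc[OF lt] dt by simp
  show "D.alloc (Suc n0) i g = T.alloc n0 i g" using D.alloc_Suc[OF lt, of i g] cur_n0 same_upto_n0 by simp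
  show "\<forall>y. t0 \<le> y \<and> y < D.time (Suc n0) \<longrightarrow> D.cur_at y i \<noteq> g"
    using D.cur_at_in_phase[of n0] dt cur_n0 by simp
qed

lemma t0_less_time_g_end: "t0 < T.time g_end"
  using T.time_less_Suc[OF time_n0] T.time_mono[of "Suc n0" g_end] n0_less_g_end by simp

lemma dev_alloc_g_less_if_time_out:
  assumes "T.time g_end = 1"
  shows "D.alloc D.N i g < T.alloc T.N i g"
proof -
  have "D.alloc D.N i g - D.alloc (Suc n0) i g \<le> r i * (D.time D.N - D.time (Suc n0))"
    using D.alloc_increment_le n0_less_N N_eq by simp
  then have "D.alloc D.N i g \<le> T.alloc n0 i g + r i * (1 - D.time (Suc n0))"
    using dev_alloc_Suc_n0 D.time_N by simp
  also have "\<dots> < T.alloc n0 i g + r i * (1 - t0)" using t0_less_dev_time rate_pos by simp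
  finally show ?thesis using truthful_alloc_g assms by simp
qed

lemma dev_alloc_g_less_if_dev_exhausted:
  assumes "g \<in> D.exh_at (T.time g_end)"
  shows "D.alloc D.N i g < T.alloc T.N i g"
proof -
  let ?\<tau> = "T.time g_end" and ?u = "min (T.time g_end) (D.time (Suc n0))"
  have "D.alloc_at 1 i g = D.alloc_at ?\<tau> i g"
    using D.alloc_at_const_after_exhausted[OF assms T.time_nonneg T.time_le_1 order_refl] by simp
  also have "\<dots> \<le> D.alloc_at ?u i g + r i * (?\<tau> - ?u)"
    using D.alloc_at_increment_le[of ?u ?\<tau> i g] T.time_nonneg[of n0] T.time_le_1[of g_end]
      t0_less_time_g_end t0_less_dev_time by simp
  also have "D.alloc_at ?u i g = D.alloc_at t0 i g"
    using D.alloc_at_not_eating[OF T.time_nonneg] dev_avoids_g t0_less_time_g_end t0_less_dev_time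
      T.time_le_1[of g_end] by simp
  also have "r i * (?\<tau> - ?u) < r i * (?\<tau> - t0)"
    using rate_pos t0_less_time_g_end t0_less_dev_time by simp
  finally show ?thesis using D.alloc_at_1 dev_alloc_at_t0 truthful_alloc_g by simp
qed

lemma other_agent_eats_g:
  assumes "T.time g_end < 1"
  shows "\<exists>j. j \<noteq> i \<and> T.alloc g_end j g > 0"
proof -
  have gin: "g \<in> T.exh g_end" using g_end assms by simp
  have "T.alloc g_end i g \<le> (\<Sum>h\<in>UNIV. T.alloc g_end i h)"
    by (rule member_le_sum) (simp_all add: T.alloc_nonneg)
  also have "\<dots> = r i * T.time g_end" by (rule T.alloc_total)
  also have "\<dots> < r i" using rate_pos assms by simp
  also have "\<dots> \<le> q g" by (rule rate_le_supply)
  also have "\<dots> = (\<Sum>k\<in>UNIV. T.alloc g_end k g)"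
    using truthful_total_exhausted[OF gin] by simp
  also have "\<dots> = T.alloc g_end i g + (\<Sum>k\<in>UNIV - {i}. T.alloc g_end k g)"
    by (rule sum.remove) simp_all
  finally have "0 < (\<Sum>k\<in>UNIV - {i}. T.alloc g_end k g)" by simp
  moreover have "(\<Sum>k\<in>UNIV - {i}. T.alloc g_end k g) \<le> 0" if "\<not> ?thesis"
    using that by (intro sum_nonpos) (auto simp: not_less)
  ultimately show ?thesis by (meson leD)
qed

lemma others_gain_g_if_dev_not_exhausted:
  assumes "T.time g_end < 1" "g \<notin> D.exh_at (T.time g_end)"
  shows "(\<Sum>k\<in>UNIV - {i}. T.alloc g_end k g) < (\<Sum>k\<in>UNIV - {i}. D.alloc_at 1 k g)"
proof -
  let ?\<tau> = "T.time g_end"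
  obtain m where m: "g_end = Suc m" "n0 \<le> m" using n0_less_g_end by (cases g_end) auto
  have gm: "g \<notin> T.exh m" using before_g_end m by simp
  have IH: "\<forall>n\<le>m. T.exh n \<subseteq> D.exh_at (T.time n)" using truthful_exh_sub_dev_exh_at m by simp
  have le: "T.alloc g_end k g \<le> D.alloc_at 1 k g" if "k \<noteq> i" for k
  proof -
    have "T.alloc g_end k g \<le> D.alloc_at ?\<tau> k g"
      using other_alloc_le_dev_alloc_at[OF gm IH _ that] assms(2) m by simp
    also have "\<dots> \<le> D.alloc_at 1 k g" using D.alloc_at_mono[OF T.time_nonneg T.time_le_1 order_refl] .
    finally show ?thesis .
  qed
  obtain j where j: "j \<noteq> i" "T.alloc g_end j g > 0" using other_agent_eats_g[OF assms(1)] by blast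
  obtain m0 where "m0 \<le> m" "\<forall>y. T.time m0 \<le> y \<and> y \<le> ?\<tau> \<longrightarrow> D.cur_at y j = g"
    using other_agent_eats_in_dev[OF gm IH _ j(1)] assms(2) j(2) m by auto
  then have "D.cur_at ?\<tau> j = g" using T.time_mono[of m0 g_end] m by simp
  then have "D.alloc_at ?\<tau> j g < D.alloc_at 1 j g"
    by (rule D.alloc_at_less_alloc_at_1_if_eating[OF T.time_nonneg assms(1)])
  moreover have "T.alloc g_end j g \<le> D.alloc_at ?\<tau> j g"
    using other_alloc_le_dev_alloc_at[OF gm IH _ j(1)] assms(2) m by simp
  ultimately have "T.alloc g_end j g < D.alloc_at 1 j g" by simp
  then show ?thesis using le j(1) by (intro sum_strict_mono_ex1) auto
qed

lemma dev_alloc_g_less_if_dev_not_exhausted: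
  assumes "T.time g_end < 1" "g \<notin> D.exh_at (T.time g_end)"
  shows "D.alloc D.N i g < T.alloc T.N i g"
proof -
  have gin: "g \<in> T.exh g_end" using g_end assms(1) by simp
  have "D.alloc_at 1 i g + (\<Sum>k\<in>UNIV - {i}. D.alloc_at 1 k g) = (\<Sum>k\<in>UNIV. D.alloc_at 1 k g)"
    by (rule sum.remove[symmetric]) simp_all
  also have "\<dots> \<le> q g" using D.alloc_at_total_bound[of 1 g] by simp
  also have "\<dots> = (\<Sum>k\<in>UNIV. T.alloc g_end k g)" using truthful_total_exhausted[OF gin] by simp
  also have "\<dots> = T.alloc g_end i g + (\<Sum>k\<in>UNIV - {i}. T.alloc g_end k g)"
    by (rule sum.remove) simp_all
  finally have "D.alloc_at 1 i g < T.alloc g_end i g"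
    using others_gain_g_if_dev_not_exhausted[OF assms] by simp
  then show ?thesis
    using D.alloc_at_1 T.alloc_const_after_exhausted[OF gin g_end_le_N] by simp
qed

lemma dev_alloc_g_less: "D.alloc D.N i g < T.alloc T.N i g"
  using dev_alloc_g_less_if_time_out dev_alloc_g_less_if_dev_exhausted
    dev_alloc_g_less_if_dev_not_exhausted g_end T.time_le_1[of g_end] by fastforce

text \<open>Agent i's shares agree on the goods it ranks above g, all exhausted at the divergence.\<close>

lemma not_lex_prefers_dev_divergent: "\<not> lex_prefers (\<pi> i) (D.alloc D.N i) (T.alloc T.N i)"
proof
  assume "lex_prefers (\<pi> i) (D.alloc D.N i) (T.alloc T.N i)"
  then obtain k where k: "k < length (\<pi> i)"
    "\<forall>l<k. D.alloc D.N i (\<pi> i ! l) = T.alloc T.N i (\<pi> i ! l)"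
    "D.alloc D.N i (\<pi> i ! k) > T.alloc T.N i (\<pi> i ! k)"
    unfolding lex_prefers_def by blast
  obtain l where l: "l < length (\<pi> i)" "\<pi> i ! l = g" "\<forall>l'<l. \<pi> i ! l' \<in> T.exh n0"
    using g_nth by blast
  have "D.alloc D.N i (\<pi> i ! l') = T.alloc T.N i (\<pi> i ! l')" if "l' < l" for l'
  proof -
    have ex: "\<pi> i ! l' \<in> T.exh n0" using l(3) that by simp
    have n0_le: "n0 \<le> T.N" using n0_less_N by simp
    have "T.alloc T.N i (\<pi> i ! l') = T.alloc n0 i (\<pi> i ! l')"
      by (rule T.alloc_const_after_exhausted[OF ex n0_le])
    moreover have "D.alloc D.N i (\<pi> i ! l') = D.alloc n0 i (\<pi> i ! l')"
      using D.alloc_const_after_exhausted[of "\<pi> i ! l'" n0 D.N] ex same_upto_n0[of n0] n0_le N_eq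
      by simp
    ultimately show ?thesis using same_upto_n0[of n0] by simp
  qed
  then consider "k < l" | "k = l" | "l < k" by linarith
  then show False
  proof cases
    case 1 then show ?thesis using \<open>\<And>l'. l' < l \<Longrightarrow> _\<close> k(3) by fastforce
  qed (use k(2,3) l(2) dev_alloc_g_less in force)+
qed

end

lemma (in sg_deviation) not_lex_prefers_dev:
  "\<not> lex_prefers (\<pi> i) (D.alloc D.N i) (T.alloc T.N i)"
proof (cases "\<exists>n. T.time n < 1 \<and> T.cur n i \<noteq> D.cur n i")
  case True
  define n0 where "n0 = (LEAST n. T.time n < 1 \<and> T.cur n i \<noteq> D.cur n i)"
  have "T.time n0 < 1 \<and> T.cur n0 i \<noteq> D.cur n0 i" unfolding n0_def by (rule LeastI_ex[OF True])
  moreover have "\<forall>n<n0. T.time n < 1 \<longrightarrow> T.cur n i = D.cur n i"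
    unfolding n0_def using not_less_Least by blast
  ultimately interpret first_divergence q r \<pi> i \<sigma> n0
    by unfold_locales auto
  show ?thesis by (rule not_lex_prefers_dev_divergent)
next
  case False
  then have "D.state T.N = T.state T.N" by (intro state_eq_while_i_agrees) auto
  then have "D.alloc D.N = T.alloc T.N" using N_eq by (simp add: D.alloc_def T.alloc_def)
  then show ?thesis by (simp add: lex_prefers_def)
qed

theorem theorem2:
  fixes q :: "'g::finite \<Rightarrow> real" and r :: "'a::finite \<Rightarrow> real"
    and \<pi> :: "'a \<Rightarrow> 'g list" and i :: 'a and \<sigma>i :: "'g list"
  assumes "\<forall>j. q j > 0" and "\<forall>k. r k > 0"
    and "(\<Sum>j\<in>UNIV. q j) = (\<Sum>k\<in>UNIV. r k)"
    and "\<forall>k. is_perm_list (\<pi> k)"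
    and "(MIN j. q j) \<ge> (MAX k. r k)"
    and "is_perm_list \<sigma>i"
  shows "\<not> lex_prefers (\<pi> i) (SG q r (\<pi>(i := \<sigma>i)) i) (SG q r \<pi> i)"
proof -
  interpret sg_deviation q r \<pi> i "\<pi>(i := \<sigma>i)"
    using assms by unfold_locales auto
  show ?thesis using not_lex_prefers_dev D.SG_eq_alloc_N T.SG_eq_alloc_N by simp
qed

end
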